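(* Consider the system on an Erdős random graph process on $N\ge2$ nodes with noise level $\eta>0$. (i) If $0<\eta\le1$, then for every initial condition, with probability one the state eventually reaches and remains at either the all-$(+1)$ state or the all-$(-1)$ state (agreement). (ii) If $\eta>1$, then $\mathbf{E}\,S(k)=\eta^{-k}\,\mathbf{E}\,S(0)$ for all $k\ge0$; in particular $\mathbf{E}\,S(k)$ converges to zero exponentially with decay exponent $\ln\eta$.
   Context: Erdős random graph process: at each time $k$, the graph $G(k)$ on nodes $V=\{1,\dots,N\}$ is a simple undirected graph in which each of the $N(N-1)/2$ possible edges is present independently with probability $1/2$ (so each of the $2^{N(N-1)/2}$ graphs has equal probability); the graphs at different times are independent, and independent of the noises and of $x(0)$. Each node carries a value $x_i(k)\in\{+1,-1\}$. The neighborhood $N_i(k)$ consists of $i$ and all nodes adjacent to $i$ in $G(k)$; $v_i(k)=\frac{1}{|N_i(k)|}\sum_{j\in N_i(k)}x_j(k)$. The update is $x_i(k+1)=\operatorname{sign}[v_i(k)+\xi_i(k)]$, where $\xi_i(k)$ are i.i.d. uniform on $[-\eta,\eta]$ across $i$ and $k$, independent of $x(0)$ and of the graph process. The state sum is $S(k)=\sum_{i=1}^N x_i(k)$. *)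

theory Defs
  imports "HOL-Probability.Probability"
begin

definition nbhd :: "nat \<Rightarrow> (nat \<Rightarrow> nat \<Rightarrow> bool) \<Rightarrow> nat \<Rightarrow> nat set" where
  "nbhd N g i = {j \<in> {1..N}. j = i \<or> g i j}"

definition local_avg :: "nat \<Rightarrow> (nat \<Rightarrow> nat \<Rightarrow> bool) \<Rightarrow> (nat \<Rightarrow> real) \<Rightarrow> nat \<Rightarrow> real" where
  "local_avg N g x i = (\<Sum>j\<in>nbhd N g i. x j) / real (card (nbhd N g i))"

text \<open>Trajectory: a k i j = adjacency of i,j in G(k); xi i k = noise of node i at time k;
  x0 = initial state.  x_i(k+1) = sign(v_i(k) + xi_i(k)).\<close>

fun traj :: "nat \<Rightarrow> (nat \<Rightarrow> nat \<Rightarrow> nat \<Rightarrow> bool) \<Rightarrow> (nat \<Rightarrow> nat \<Rightarrow> real) \<Rightarrow> (nat \<Rightarrow> real)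
             \<Rightarrow> nat \<Rightarrow> nat \<Rightarrow> real" where
  "traj N a xi x0 0 = x0"
| "traj N a xi x0 (Suc k) = (\<lambda>i. sgn (local_avg N (a k) (traj N a xi x0 k) i + xi i k))"

text \<open>The basic random inputs: edge indicators (time k, pair i<l) and noises (node i, time k).\<close>

definition basic_index :: "nat \<Rightarrow> ((nat \<times> nat \<times> nat) + (nat \<times> nat)) set" where
  "basic_index N = Inl ` {(k, i, l). 1 \<le> i \<and> i < l \<and> l \<le> N} \<union> Inr ` {(i, k). 1 \<le> i \<and> i \<le> N}"

definition basic_family ::
  "(nat \<Rightarrow> nat \<Rightarrow> nat \<Rightarrow> 'a \<Rightarrow> bool) \<Rightarrow> (nat \<Rightarrow> nat \<Rightarrow> 'a \<Rightarrow> real)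
    \<Rightarrow> (nat \<times> nat \<times> nat) + (nat \<times> nat) \<Rightarrow> 'a \<Rightarrow> real" where
  "basic_family adj xi j = (case j of
      Inl (k, i, l) \<Rightarrow> (\<lambda>\<omega>. of_bool (adj k i l \<omega>))
    | Inr (i, k) \<Rightarrow> xi i k)"

text \<open>Independence of two random variables with possibly different value types
  (the library's indep_var requires a common value type); this is the same definition
  as indep_var, via generated sigma-algebras.\<close>

definition indep_rv :: "'a measure \<Rightarrow> 'b measure \<Rightarrow> ('a \<Rightarrow> 'b) \<Rightarrow> 'c measure \<Rightarrow> ('a \<Rightarrow> 'c) \<Rightarrow> bool" where
  "indep_rv M Ma A Mb B \<longleftrightarrow>
     A \<in> measurable M Ma \<and> B \<in> measurable M Mb \<and>
     prob_space.indep_set M {A -` X \<inter> space M | X. X \<in> sets Ma} {B -` Y \<inter> space M | Y. Y \<in> sets Mb}"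

definition state :: "nat \<Rightarrow> (nat \<Rightarrow> nat \<Rightarrow> nat \<Rightarrow> 'a \<Rightarrow> bool) \<Rightarrow> (nat \<Rightarrow> nat \<Rightarrow> 'a \<Rightarrow> real)
    \<Rightarrow> ('a \<Rightarrow> nat \<Rightarrow> real) \<Rightarrow> nat \<Rightarrow> 'a \<Rightarrow> nat \<Rightarrow> real" where
  "state N adj xi x0 k \<omega> = traj N (\<lambda>k i j. adj k i j \<omega>) (\<lambda>i k. xi i k \<omega>) (x0 \<omega>) k"

definition state_sum :: "nat \<Rightarrow> (nat \<Rightarrow> nat \<Rightarrow> nat \<Rightarrow> 'a \<Rightarrow> bool) \<Rightarrow> (nat \<Rightarrow> nat \<Rightarrow> 'a \<Rightarrow> real)
    \<Rightarrow> ('a \<Rightarrow> nat \<Rightarrow> real) \<Rightarrow> nat \<Rightarrow> 'a \<Rightarrow> real" where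
  "state_sum N adj xi x0 k \<omega> = (\<Sum>i\<in>{1..N}. state N adj xi x0 k \<omega> i)"

end

theory Submission
  imports Defs "HOL-Combinatorics.Transposition"
begin

(*
  (i) eta <= 1.  At every step, with probability q = 2^-(N(N-1)/2 + N) > 0 and independently
  of the past, the graph is complete and all noises share the sign of the current state
  sum; then every node sees the same average and the state jumps to consensus.  Hence the
  probability of no consensus up to time k is at most (1 - q)^k, so consensus is reached
  almost surely.  Since |xi| < 1 almost surely, a consensus is never left.

  (ii) eta > 1.  Given the past, a uniform noise turns a local average v (|v| <= 1) into a
  mean next state v / eta.  The local averages are a weighted sum of the current state
  with the neighbourhood weights of the random graph, which is independent of the current
  state and uniform over all graphs; relabelling nodes shows the graph-averaged weight
  matrix is doubly stochastic, so E S(k+1) = E S(k) / eta.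
*)

lemma sum_of_bool_select:
  fixes f :: "'a \<Rightarrow> 'b::semiring_1"
  assumes "finite A" "a \<in> A"
  shows "(\<Sum>x\<in>A. of_bool (x = a) * f x) = f a"
  using assms by simp

lemma geometric_decay:
  fixes f :: "nat \<Rightarrow> real"
  assumes step: "\<And>k. f (Suc k) = f k / \<eta>"
  shows "f k = \<eta> powi (- int k) * f 0"
proof -
  have "f k = f 0 / \<eta> ^ k"
    by (induction k) (simp_all add: step)
  then show ?thesis
    by (simp add: power_int_minus divide_inverse mult.commute)
qed

lemma geometric_decay_tendsto_zero:
  fixes \<eta> c :: real
  assumes "1 < \<eta>"
  shows "(\<lambda>k. \<eta> powi (- int k) * c) \<longlonglongrightarrow> 0"
proof -
  have "(\<lambda>k. inverse \<eta> ^ k * c) \<longlonglongrightarrow> 0"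
    using assms by (intro tendsto_mult_left_zero LIMSEQ_power_zero) (simp add: inverse_less_1_iff)
  then show ?thesis
    by (simp add: power_int_minus power_inverse)
qed

section \<open>Local averages as weighted sums\<close>

definition nbhd_weight :: "nat \<Rightarrow> (nat \<Rightarrow> nat \<Rightarrow> bool) \<Rightarrow> nat \<Rightarrow> nat \<Rightarrow> real" where
  "nbhd_weight N g i j = of_bool (j \<in> nbhd N g i) / real (card (nbhd N g i))"

lemma nbhd_subset: "nbhd N g i \<subseteq> {1..N}"
  by (auto simp: nbhd_def)

lemma finite_nbhd: "finite (nbhd N g i)"
  using nbhd_subset by (rule finite_subset) simp

lemma self_in_nbhd: "i \<in> {1..N} \<Longrightarrow> i \<in> nbhd N g i"
  by (simp add: nbhd_def)

lemma card_nbhd_pos: "i \<in> {1..N} \<Longrightarrow> card (nbhd N g i) > 0"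
  using finite_nbhd self_in_nbhd card_gt_0_iff by blast

lemma nbhd_cong:
  assumes "\<And>j. j \<in> {1..N} \<Longrightarrow> j \<noteq> i \<Longrightarrow> g i j = g' i j"
  shows "nbhd N g i = nbhd N g' i"
  using assms by (auto simp: nbhd_def)

lemma local_avg_weighted_sum:
  "local_avg N g x i = (\<Sum>j\<in>{1..N}. x j * nbhd_weight N g i j)"
proof -
  have "sum x (nbhd N g i) = (\<Sum>j\<in>{1..N}. x j * of_bool (j \<in> nbhd N g i))"
    using nbhd_subset[of N g i] by (simp add: Int_absorb1 Int_absorb2)
  then have "local_avg N g x i
      = (\<Sum>j\<in>{1..N}. x j * of_bool (j \<in> nbhd N g i)) / real (card (nbhd N g i))"
    by (simp only: local_avg_def)
  then show ?thesis
    by (simp only: nbhd_weight_def sum_divide_distrib times_divide_eq_right)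
qed

lemma nbhd_weight_bounds:
  assumes "i \<in> {1..N}"
  shows "0 \<le> nbhd_weight N g i j" "nbhd_weight N g i j \<le> 1"
  using card_nbhd_pos[OF assms, of g] by (auto simp: nbhd_weight_def)

lemma nbhd_weight_row_sum:
  assumes "i \<in> {1..N}"
  shows "(\<Sum>j\<in>{1..N}. nbhd_weight N g i j) = 1"
proof -
  have "(\<Sum>j\<in>{1..N}. of_bool (j \<in> nbhd N g i)) = real (card (nbhd N g i))"
    using nbhd_subset[of N g i] by (simp add: Int_absorb1 Int_absorb2)
  then show ?thesis
    using card_nbhd_pos[OF assms] by (simp add: nbhd_weight_def flip: sum_divide_distrib)
qed

lemma local_avg_const:
  assumes "i \<in> {1..N}" and "\<And>j. j \<in> {1..N} \<Longrightarrow> x j = c"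
  shows "local_avg N g x i = c"
proof -
  have "local_avg N g x i = (\<Sum>j\<in>{1..N}. c * nbhd_weight N g i j)"
    unfolding local_avg_weighted_sum using assms(2) by (intro sum.cong) auto
  also have "\<dots> = c * (\<Sum>j\<in>{1..N}. nbhd_weight N g i j)"
    by (rule sum_distrib_left[symmetric])
  finally show ?thesis
    unfolding nbhd_weight_row_sum[OF assms(1)] by simp
qed

lemma local_avg_complete:
  assumes "i \<in> {1..N}" and "\<And>j. j \<in> {1..N} \<Longrightarrow> j \<noteq> i \<Longrightarrow> g i j"
  shows "local_avg N g x i = (\<Sum>j\<in>{1..N}. x j) / real N"
proof -
  have "nbhd N g i = {1..N}"
    using assms(2) by (fastforce simp: nbhd_def)
  then show ?thesis by (simp add: local_avg_def)
qed

lemma local_avg_abs_le: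
  assumes "i \<in> {1..N}" and "\<And>j. j \<in> {1..N} \<Longrightarrow> \<bar>x j\<bar> \<le> 1"
  shows "\<bar>local_avg N g x i\<bar> \<le> 1"
proof -
  have "\<bar>local_avg N g x i\<bar> \<le> (\<Sum>j\<in>{1..N}. \<bar>x j * nbhd_weight N g i j\<bar>)"
    unfolding local_avg_weighted_sum by (rule sum_abs)
  also have "\<dots> \<le> (\<Sum>j\<in>{1..N}. nbhd_weight N g i j)"
    using assms(2) by (intro sum_mono) (auto simp: abs_mult nbhd_weight_def intro!: divide_right_mono)
  finally show ?thesis
    using nbhd_weight_row_sum[OF assms(1)] by simp
qed

text \<open>Local averages of integer vectors with entries in [-1,1] range over a finite
  grid of fractions; this is what makes their distribution discrete.\<close>

definition avg_grid :: "nat \<Rightarrow> real set" where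
  "avg_grid N = (\<lambda>(s, c). real_of_int s / real c) ` ({-int N..int N} \<times> {1..N})"

lemma finite_avg_grid: "finite (avg_grid N)"
  by (simp add: avg_grid_def)

lemma local_avg_in_grid:
  assumes "i \<in> {1..N}" and "\<And>j. j \<in> {1..N} \<Longrightarrow> x j \<in> {-1, 0, 1}"
  shows "local_avg N g x i \<in> avg_grid N"
proof -
  define nb where "nb = nbhd N g i"
  define s where "s = (\<Sum>j\<in>nb. \<lfloor>x j\<rfloor>)"
  have x_int: "x j = of_int \<lfloor>x j\<rfloor>" "\<bar>\<lfloor>x j\<rfloor>\<bar> \<le> 1" if "j \<in> nb" for j
  proof -
    have "j \<in> {1..N}" using that nbhd_subset unfolding nb_def by blast
    then have "x j \<in> {-1, 0, 1}" by (rule assms(2))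
    then have "x j = of_int \<lfloor>x j\<rfloor> \<and> \<bar>\<lfloor>x j\<rfloor>\<bar> \<le> 1" by (auto simp: floor_minus)
    then show "x j = of_int \<lfloor>x j\<rfloor>" "\<bar>\<lfloor>x j\<rfloor>\<bar> \<le> 1" by auto
  qed
  have "sum x nb = real_of_int s"
    unfolding s_def of_int_sum by (intro sum.cong) (auto dest: x_int)
  moreover have "\<bar>s\<bar> \<le> int (card nb)"
  proof -
    have "\<bar>s\<bar> \<le> (\<Sum>j\<in>nb. \<bar>\<lfloor>x j\<rfloor>\<bar>)" unfolding s_def by (rule sum_abs)
    also have "\<dots> \<le> (\<Sum>j\<in>nb. 1)" by (intro sum_mono) (auto dest: x_int)
    finally show ?thesis by simp
  qed
  moreover have "card nb \<in> {1..N}"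
    using card_nbhd_pos[OF assms(1)] card_mono[OF _ nbhd_subset] unfolding nb_def
    by (auto simp: Suc_le_eq)
  ultimately show ?thesis
    unfolding avg_grid_def local_avg_def nb_def[symmetric]
    by (intro rev_image_eqI[of "(s, card nb)"]) auto
qed

section \<open>Graphs on {1..N} as sets of edges\<close>

definition node_pairs :: "nat \<Rightarrow> (nat \<times> nat) set" where
  "node_pairs N = {(i, l). 1 \<le> i \<and> i < l \<and> l \<le> N}"

definition all_edges :: "nat \<Rightarrow> nat set set" where
  "all_edges N = (\<lambda>(i, l). {i, l}) ` node_pairs N"

definition edge_rel :: "nat set set \<Rightarrow> nat \<Rightarrow> nat \<Rightarrow> bool" where
  "edge_rel E a b \<longleftrightarrow> {a, b} \<in> E"

lemma finite_node_pairs: "finite (node_pairs N)"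
  by (rule finite_subset[of _ "{1..N} \<times> {1..N}"]) (auto simp: node_pairs_def)

lemma finite_all_edges: "finite (all_edges N)"
  by (simp add: all_edges_def finite_node_pairs)

lemma inj_on_pair_edge: "inj_on (\<lambda>(i, l). {i, l}) (node_pairs N)"
  by (auto simp: inj_on_def node_pairs_def doubleton_eq_iff)

lemma card_all_edges: "card (all_edges N) = card (node_pairs N)"
  unfolding all_edges_def using inj_on_pair_edge by (rule card_image)

lemma doubleton_in_all_edges:
  "{a, b} \<in> all_edges N \<longleftrightarrow> a \<in> {1..N} \<and> b \<in> {1..N} \<and> a \<noteq> b"
proof
  assume "{a, b} \<in> all_edges N"
  then show "a \<in> {1..N} \<and> b \<in> {1..N} \<and> a \<noteq> b"
    by (auto simp: all_edges_def node_pairs_def doubleton_eq_iff)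
next
  assume ab: "a \<in> {1..N} \<and> b \<in> {1..N} \<and> a \<noteq> b"
  show "{a, b} \<in> all_edges N"
  proof (cases "a < b")
    case True
    then show ?thesis
      using ab unfolding all_edges_def by (intro rev_image_eqI[of "(a, b)"]) (auto simp: node_pairs_def)
  next
    case False
    then show ?thesis
      using ab unfolding all_edges_def by (intro rev_image_eqI[of "(b, a)"]) (auto simp: node_pairs_def)
  qed
qed

lemma all_edges_cases:
  assumes "e \<in> all_edges N"
  obtains a b where "e = {a, b}" "a \<in> {1..N}" "b \<in> {1..N}" "a \<noteq> b"
  using assms by (auto simp: all_edges_def node_pairs_def)

lemma nbhd_weight_relabel:
  assumes inj: "inj \<pi>" and perm: "\<pi> ` {1..N} = {1..N}"
  shows "nbhd_weight N (edge_rel (image \<pi> ` E)) (\<pi> i) (\<pi> j) = nbhd_weight N (edge_rel E) i j"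
proof -
  have inj_img: "inj (image \<pi>)"
    using inj by (simp add: inj_image_eq_iff inj_def)
  have mem: "\<pi> c \<in> nbhd N (edge_rel (image \<pi> ` E)) (\<pi> i) \<longleftrightarrow> c \<in> nbhd N (edge_rel E) i" for c
  proof -
    have "\<pi> c \<in> {1..N} \<longleftrightarrow> c \<in> {1..N}"
      using perm inj by (metis inj_image_mem_iff)
    moreover have "{\<pi> i, \<pi> c} \<in> image \<pi> ` E \<longleftrightarrow> {i, c} \<in> E"
      using inj_image_mem_iff[OF inj_img, of "{i, c}" E] by simp
    ultimately show ?thesis
      using inj by (auto simp: nbhd_def edge_rel_def inj_eq)
  qed
  have nb: "nbhd N (edge_rel (image \<pi> ` E)) (\<pi> i) = \<pi> ` nbhd N (edge_rel E) i"
  proof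
    show "nbhd N (edge_rel (image \<pi> ` E)) (\<pi> i) \<subseteq> \<pi> ` nbhd N (edge_rel E) i"
    proof
      fix c assume c: "c \<in> nbhd N (edge_rel (image \<pi> ` E)) (\<pi> i)"
      then obtain d where "c = \<pi> d"
        using nbhd_subset perm by blast
      then show "c \<in> \<pi> ` nbhd N (edge_rel E) i"
        using c mem by blast
    qed
  qed (use mem in blast)
  show ?thesis
    unfolding nbhd_weight_def nb card_image[OF inj_on_subset[OF inj subset_UNIV]]
    by (simp add: inj_image_mem_iff[OF inj])
qed

text \<open>Averaged over all graphs, the weight i gives to j equals the weight j gives to i:
  relabel by the transposition of i and j.\<close>

lemma sum_nbhd_weight_swap:
  assumes "i \<in> {1..N}" "j \<in> {1..N}"
  shows "(\<Sum>E\<in>Pow (all_edges N). nbhd_weight N (edge_rel E) i j)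
       = (\<Sum>E\<in>Pow (all_edges N). nbhd_weight N (edge_rel E) j i)"
proof -
  define \<tau> where "\<tau> = Transposition.transpose i j"
  define relabel where "relabel E = image \<tau> ` E" for E :: "nat set set"
  have inj: "inj \<tau>" and perm: "\<tau> ` {1..N} = {1..N}"
    using assms by (simp_all add: \<tau>_def inj_transpose)
  have relabel_relabel: "relabel (relabel E) = E" for E
    by (simp add: relabel_def \<tau>_def image_image)
  have relabel_edges: "relabel E \<subseteq> all_edges N" if E: "E \<subseteq> all_edges N" for E
  proof
    fix e' assume "e' \<in> relabel E"
    then obtain e where e: "e \<in> all_edges N" "e' = \<tau> ` e"
      using E unfolding relabel_def by blast
    obtain a b where "e = {a, b}" "a \<in> {1..N}" "b \<in> {1..N}" "a \<noteq> b"
      using e(1) by (rule all_edges_cases)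
    then have "e' = {\<tau> a, \<tau> b}" "\<tau> a \<noteq> \<tau> b"
      using e(2) inj by (auto simp: inj_eq)
    moreover have "\<tau> a \<in> {1..N}" "\<tau> b \<in> {1..N}"
      using \<open>a \<in> {1..N}\<close> \<open>b \<in> {1..N}\<close> perm by blast+
    ultimately show "e' \<in> all_edges N"
      by (simp add: doubleton_in_all_edges)
  qed
  have "(\<Sum>E\<in>Pow (all_edges N). nbhd_weight N (edge_rel E) i j)
      = (\<Sum>E\<in>Pow (all_edges N). nbhd_weight N (edge_rel (relabel E)) (\<tau> i) (\<tau> j))"
    unfolding relabel_def nbhd_weight_relabel[OF inj perm] ..
  also have "\<dots> = (\<Sum>E\<in>Pow (all_edges N). nbhd_weight N (edge_rel (relabel E)) j i)"
    by (simp add: \<tau>_def)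
  also have "\<dots> = (\<Sum>E\<in>Pow (all_edges N). nbhd_weight N (edge_rel E) j i)"
    by (rule sum.reindex_bij_witness[where i = relabel and j = relabel])
       (auto simp: relabel_relabel relabel_edges)
  finally show ?thesis .
qed

text \<open>Hence the column sums of the graph-averaged weight matrix equal its row sums.\<close>

lemma sum_nbhd_weight_column:
  assumes "j \<in> {1..N}"
  shows "(\<Sum>i\<in>{1..N}. \<Sum>E\<in>Pow (all_edges N). nbhd_weight N (edge_rel E) i j)
       = 2 ^ card (node_pairs N)"
proof -
  have "(\<Sum>i\<in>{1..N}. \<Sum>E\<in>Pow (all_edges N). nbhd_weight N (edge_rel E) i j)
      = (\<Sum>i\<in>{1..N}. \<Sum>E\<in>Pow (all_edges N). nbhd_weight N (edge_rel E) j i)"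
    by (intro sum.cong refl sum_nbhd_weight_swap assms)
  also have "\<dots> = (\<Sum>E\<in>Pow (all_edges N). \<Sum>i\<in>{1..N}. nbhd_weight N (edge_rel E) j i)"
    by (rule sum.swap)
  also have "\<dots> = card (Pow (all_edges N))"
    using nbhd_weight_row_sum[OF assms] by simp
  finally show ?thesis
    by (simp add: card_Pow finite_all_edges card_all_edges)
qed

section \<open>Uniformly distributed noise\<close>

locale uniform_rv = prob_space M for M :: "'a measure" +
  fixes Y :: "'a \<Rightarrow> real" and \<eta> :: real
  assumes pos: "\<eta> > 0" and measurable: "Y \<in> borel_measurable M"
    and distr: "distr M lborel Y = uniform_measure lborel {-\<eta>..\<eta>}"
begin

lemma prob_vimage:
  assumes A: "A \<in> sets borel"
  shows "prob (Y -` A \<inter> space M) = measure lborel ({-\<eta>..\<eta>} \<inter> A) / (2 * \<eta>)"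
proof -
  have "emeasure lborel ({-\<eta>..\<eta>} \<inter> A) \<le> emeasure lborel {-\<eta>..\<eta>}"
    using A by (intro emeasure_mono) auto
  also have "\<dots> < \<top>"
    using pos by (subst emeasure_lborel_Icc) auto
  finally have fin: "emeasure lborel ({-\<eta>..\<eta>} \<inter> A) \<noteq> \<top>"
    by simp
  have "prob (Y -` A \<inter> space M) = measure (distr M lborel Y) A"
    using measurable A by (simp add: measure_distr)
  also have "\<dots> = enn2real (emeasure lborel ({-\<eta>..\<eta>} \<inter> A) / ennreal (2 * \<eta>))"
    using A pos by (simp add: distr measure_def)
  also have "\<dots> = measure lborel ({-\<eta>..\<eta>} \<inter> A) / (2 * \<eta>)"
    using fin pos by (simp add: emeasure_eq_ennreal_measure divide_ennreal)
  finally show ?thesis .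
qed

lemma prob_greater:
  assumes "-\<eta> \<le> c" "c \<le> \<eta>"
  shows "prob (Y -` {c<..} \<inter> space M) = (\<eta> - c) / (2 * \<eta>)"
proof -
  have "{-\<eta>..\<eta>} \<inter> {c<..} = {c<..\<eta>}" using assms by auto
  then show ?thesis using prob_vimage[of "{c<..}"] assms by simp
qed

lemma prob_less:
  assumes "-\<eta> \<le> c" "c \<le> \<eta>"
  shows "prob (Y -` {..<c} \<inter> space M) = (c + \<eta>) / (2 * \<eta>)"
proof -
  have "{-\<eta>..\<eta>} \<inter> {..<c} = {-\<eta>..<c}" using assms by auto
  then show ?thesis using prob_vimage[of "{..<c}"] assms by simp
qed

lemma expectation_sgn_shift:
  assumes a: "\<bar>a\<bar> \<le> \<eta>"
  shows "(\<integral>\<omega>. sgn (a + Y \<omega>) \<partial>M) = a / \<eta>"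
proof -
  define up where "up = Y -` {-a<..} \<inter> space M"
  define down where "down = Y -` {..< -a} \<inter> space M"
  have ev: "up \<in> events" "down \<in> events"
    unfolding up_def down_def using measurable by auto
  have "(\<integral>\<omega>. sgn (a + Y \<omega>) \<partial>M) = (\<integral>\<omega>. indicator up \<omega> - indicator down \<omega> \<partial>M)"
    by (rule Bochner_Integration.integral_cong) (auto simp: up_def down_def indicator_def sgn_if)
  also have "\<dots> = (\<integral>\<omega>. indicator up \<omega> \<partial>M) - (\<integral>\<omega>. indicator down \<omega> \<partial>M)"
    using ev by (intro Bochner_Integration.integral_diff integrable_real_indicator) (auto simp: less_top[symmetric])
  also have "\<dots> = prob up - prob down"
    using ev by (simp add: Int_absorb2 sets.sets_into_space)
  also have "\<dots> = a / \<eta>"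
    using a pos by (simp add: up_def down_def prob_greater prob_less field_simps)
  finally show ?thesis .
qed

lemma AE_interior: "AE \<omega> in M. -\<eta> < Y \<omega> \<and> Y \<omega> < \<eta>"
proof -
  have ev: "Y -` {-\<eta><..<\<eta>} \<inter> space M \<in> events"
    using measurable by auto
  have "{-\<eta>..\<eta>} \<inter> {-\<eta><..<\<eta>} = {-\<eta><..<\<eta>}" by auto
  then have "prob (Y -` {-\<eta><..<\<eta>} \<inter> space M) = 1"
    using pos by (simp add: prob_vimage)
  then have "AE \<omega> in M. \<omega> \<in> Y -` {-\<eta><..<\<eta>} \<inter> space M"
    using AE_in_set_eq_1[OF ev] by simp
  then show ?thesis by auto
qed

end

section \<open>Expectations under independence\<close>

text \<open>If V takes finitely many values and is independent of Y, then h(V,Y) can be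
  integrated by first averaging over Y with V frozen.  This avoids Fubini: we split
  along the finitely many values of V.\<close>

lemma (in prob_space) integral_indep_finite_valued:
  fixes V Y :: "'a \<Rightarrow> real" and h :: "real \<Rightarrow> real \<Rightarrow> real"
  assumes indep: "indep_var borel V borel Y"
    and R: "finite R" "\<And>\<omega>. \<omega> \<in> space M \<Longrightarrow> V \<omega> \<in> R"
    and h: "\<And>a. h a \<in> borel_measurable borel" and bound: "\<And>a y. \<bar>h a y\<bar> \<le> B"
  shows "(\<integral>\<omega>. h (V \<omega>) (Y \<omega>) \<partial>M) = (\<integral>\<omega>. (\<integral>\<omega>'. h (V \<omega>) (Y \<omega>') \<partial>M) \<partial>M)"
proof -
  define c where "c a = (\<integral>\<omega>. h a (Y \<omega>) \<partial>M)" for a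
  define is_val where "is_val a = (\<lambda>\<omega>. of_bool (a = V \<omega>) :: real)" for a
  have indep_a: "indep_var borel (is_val a) borel (\<lambda>\<omega>. h a (Y \<omega>))" for a
    using indep_var_compose[OF indep, of "\<lambda>v. of_bool (a = v)" borel "h a" borel] h
    by (simp add: is_val_def comp_def)
  have int_val: "integrable M (is_val a)" for a
    using indep_a[of a] by (intro integrable_const_bound[where B = 1]) (auto simp: is_val_def indep_var_eq)
  have int_h: "integrable M (\<lambda>\<omega>. h a (Y \<omega>))" for a
    using indep_a[of a] bound by (intro integrable_const_bound[where B = B]) (auto simp: indep_var_eq)
  have split: "f (V \<omega>) = (\<Sum>a\<in>R. is_val a \<omega> * f a)" if "\<omega> \<in> space M" for f :: "real \<Rightarrow> real" and \<omega>
    unfolding is_val_def using sum_of_bool_select[OF R(1) R(2)[OF that]] by (simp add: eq_commute)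
  have "(\<integral>\<omega>. h (V \<omega>) (Y \<omega>) \<partial>M) = (\<integral>\<omega>. (\<Sum>a\<in>R. is_val a \<omega> * h a (Y \<omega>)) \<partial>M)"
    by (intro Bochner_Integration.integral_cong refl split)
  also have "\<dots> = (\<Sum>a\<in>R. (\<integral>\<omega>. is_val a \<omega> \<partial>M) * c a)"
    unfolding c_def using indep_a int_val int_h
    by (simp add: indep_var_lebesgue_integral indep_var_integrable)
  also have "\<dots> = (\<integral>\<omega>. (\<Sum>a\<in>R. is_val a \<omega> * c a) \<partial>M)"
    using int_val by simp
  also have "\<dots> = (\<integral>\<omega>. c (V \<omega>) \<partial>M)"
    by (intro Bochner_Integration.integral_cong refl split[symmetric])
  finally show ?thesis unfolding c_def .
qed

lemma (in prob_space) indep_set_mono: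
  "indep_set A B \<Longrightarrow> A' \<subseteq> A \<Longrightarrow> B' \<subseteq> B \<Longrightarrow> indep_set A' B'"
  unfolding indep_sets2_eq by blast

section \<open>Independent inputs and the \<sigma>-algebras they generate\<close>

text \<open>For disjoint S, T \<subseteq> I, the \<sigma>-algebra
  generated by X and the inputs in S (the ``past'') is independent of the one generated
  by the inputs in T (a ``block'').\<close>

locale independent_inputs = prob_space M for M :: "'a measure" +
  fixes MX :: "'b measure" and X :: "'a \<Rightarrow> 'b"
    and F :: "'i \<Rightarrow> 'a \<Rightarrow> real" and I :: "'i set"
  assumes indep_inputs: "indep_vars (\<lambda>_. borel) F I"
    and indep_init: "indep_rv M MX X (Pi\<^sub>M I (\<lambda>_. borel)) (\<lambda>\<omega>. \<lambda>j\<in>I. F j \<omega>)"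
begin

abbreviation inputs_on :: "'i set \<Rightarrow> 'a \<Rightarrow> 'i \<Rightarrow> real" where
  "inputs_on S \<equiv> (\<lambda>\<omega>. restrict (\<lambda>j. F j \<omega>) S)"

abbreviation cube :: "'i set \<Rightarrow> ('i \<Rightarrow> real) measure" where
  "cube S \<equiv> Pi\<^sub>M S (\<lambda>_. borel)"

definition past_gen :: "'i set \<Rightarrow> 'a set set" where
  "past_gen S = {X -` A \<inter> inputs_on S -` B \<inter> space M | A B. A \<in> sets MX \<and> B \<in> sets (cube S)}"

definition block_gen :: "'i set \<Rightarrow> 'a set set" where
  "block_gen T = {inputs_on T -` C \<inter> space M | C. C \<in> sets (cube T)}"

definition past :: "'i set \<Rightarrow> 'a measure" where
  "past S = sigma (space M) (past_gen S)"

definition block :: "'i set \<Rightarrow> 'a measure" where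
  "block T = sigma (space M) (block_gen T)"

lemma input_measurable: "j \<in> I \<Longrightarrow> F j \<in> borel_measurable M"
  using indep_inputs unfolding indep_vars_def by auto

lemma inputs_on_measurable: "S \<subseteq> I \<Longrightarrow> inputs_on S \<in> measurable M (cube S)"
  by (intro measurable_restrict) (auto intro: input_measurable)

lemma init_measurable: "X \<in> measurable M MX"
  using indep_init unfolding indep_rv_def by auto

lemma space_past [simp]: "space (past S) = space M"
  unfolding past_def by (rule space_measure_of) (auto simp: past_gen_def)

lemma sets_past: "sets (past S) = sigma_sets (space M) (past_gen S)"
  unfolding past_def by (rule sets_measure_of) (auto simp: past_gen_def)

lemma space_block [simp]: "space (block T) = space M"
  unfolding block_def by (rule space_measure_of) (auto simp: block_gen_def)

lemma sets_block: "sets (block T) = sigma_sets (space M) (block_gen T)"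
  unfolding block_def by (rule sets_measure_of) (auto simp: block_gen_def)

lemma past_gen_events:
  assumes "S \<subseteq> I" shows "past_gen S \<subseteq> events"
proof
  fix a assume "a \<in> past_gen S"
  then obtain A B where "A \<in> sets MX" "B \<in> sets (cube S)" and a: "a = X -` A \<inter> inputs_on S -` B \<inter> space M"
    unfolding past_gen_def by blast
  then have "(X -` A \<inter> space M) \<inter> (inputs_on S -` B \<inter> space M) \<in> events"
    using init_measurable inputs_on_measurable[OF assms] by (intro sets.Int measurable_sets) auto
  moreover have "X -` A \<inter> inputs_on S -` B \<inter> space M = (X -` A \<inter> space M) \<inter> (inputs_on S -` B \<inter> space M)"
    by auto
  ultimately show "a \<in> events" using a by simp
qed

lemma block_gen_events: "T \<subseteq> I \<Longrightarrow> block_gen T \<subseteq> events"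
  unfolding block_gen_def using inputs_on_measurable by auto

lemma sets_past_events: "S \<subseteq> I \<Longrightarrow> sets (past S) \<subseteq> events"
  unfolding sets_past using past_gen_events by (intro sets.sigma_sets_subset) auto

lemma sets_block_events: "T \<subseteq> I \<Longrightarrow> sets (block T) \<subseteq> events"
  unfolding sets_block using block_gen_events by (intro sets.sigma_sets_subset) auto

lemma measurable_coarser:
  assumes "sets A \<subseteq> events" "space A = space M" "f \<in> measurable A B"
  shows "f \<in> measurable M B"
  using assms unfolding measurable_def by auto

lemma init_measurable_past: "S \<subseteq> I \<Longrightarrow> X \<in> measurable (past S) MX"
proof (rule measurableI)
  fix A assume "S \<subseteq> I" "A \<in> sets MX"
  then have "X -` A \<inter> inputs_on S -` space (cube S) \<inter> space M \<in> past_gen S"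
    unfolding past_gen_def by blast
  moreover have "X -` A \<inter> inputs_on S -` space (cube S) \<inter> space M = X -` A \<inter> space (past S)"
    using measurable_space[OF inputs_on_measurable[OF \<open>S \<subseteq> I\<close>]] by auto
  ultimately show "X -` A \<inter> space (past S) \<in> sets (past S)"
    unfolding sets_past by auto
qed (use measurable_space[OF init_measurable] in auto)

lemma inputs_on_measurable_past: "S \<subseteq> I \<Longrightarrow> inputs_on S \<in> measurable (past S) (cube S)"
proof (rule measurableI)
  fix B assume "S \<subseteq> I" "B \<in> sets (cube S)"
  then have "X -` space MX \<inter> inputs_on S -` B \<inter> space M \<in> past_gen S"
    unfolding past_gen_def by blast
  moreover have "X -` space MX \<inter> inputs_on S -` B \<inter> space M = inputs_on S -` B \<inter> space (past S)"
    using measurable_space[OF init_measurable] by auto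
  ultimately show "inputs_on S -` B \<inter> space (past S) \<in> sets (past S)"
    unfolding sets_past by auto
qed (use measurable_space[OF inputs_on_measurable] in auto)

lemma inputs_on_measurable_block: "inputs_on T \<in> measurable (block T) (cube T)"
proof (rule measurableI)
  fix C assume "C \<in> sets (cube T)"
  then show "inputs_on T -` C \<inter> space (block T) \<in> sets (block T)"
    unfolding sets_block block_gen_def by auto
qed (auto simp: space_PiM)

lemma input_measurable_past: "S \<subseteq> I \<Longrightarrow> j \<in> S \<Longrightarrow> F j \<in> borel_measurable (past S)"
  using measurable_compose[OF inputs_on_measurable_past measurable_component_singleton] by simp

lemma input_measurable_block: "j \<in> T \<Longrightarrow> F j \<in> borel_measurable (block T)"
  using measurable_compose[OF inputs_on_measurable_block measurable_component_singleton] by simp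

lemma input_event_past:
  assumes "S \<subseteq> I" "finite J" "J \<noteq> {}" "J \<subseteq> S" "\<And>j. j \<in> J \<Longrightarrow> B j \<in> sets borel"
  shows "(\<Inter>j\<in>J. F j -` B j \<inter> space M) \<in> sets (past S)"
  using assms measurable_sets[OF input_measurable_past] by (intro sets.finite_INT) auto

lemma input_event_block:
  assumes "finite J" "J \<noteq> {}" "J \<subseteq> T" "\<And>j. j \<in> J \<Longrightarrow> B j \<in> sets borel"
  shows "(\<Inter>j\<in>J. F j -` B j \<inter> space M) \<in> sets (block T)"
  using assms measurable_sets[OF input_measurable_block] by (intro sets.finite_INT) auto

text \<open>A generator
  event of the past meets a block event in an event described by X and by the inputs in
  S \<union> T; the latter factor splits by mutual independence of the inputs.\<close>

lemma indep_past_block: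
  assumes ST: "S \<subseteq> I" "T \<subseteq> I" "S \<inter> T = {}"
  shows "indep_set (sets (past S)) (sets (block T))"
  unfolding sets_past sets_block
proof (rule indep_set_sigma_sets)
  define all where "all = inputs_on I"
  have all: "all \<in> measurable M (cube I)"
    unfolding all_def by (rule inputs_on_measurable) simp
  have X_all: "prob (X -` A \<inter> space M \<inter> (all -` D \<inter> space M))
      = prob (X -` A \<inter> space M) * prob (all -` D \<inter> space M)"
    if "A \<in> sets MX" "D \<in> sets (cube I)" for A D
    using indep_init that unfolding indep_rv_def all_def by (intro indep_setD) auto
  have S_T: "prob (inputs_on S -` B \<inter> space M \<inter> (inputs_on T -` C \<inter> space M))
      = prob (inputs_on S -` B \<inter> space M) * prob (inputs_on T -` C \<inter> space M)"
    if "B \<in> sets (cube S)" "C \<in> sets (cube T)" for B C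
  proof -
    have "indep_var (cube S) (inputs_on S) (cube T) (inputs_on T)"
      by (rule indep_var_restrict[OF indep_inputs ST(3,1,2)])
    then show ?thesis
      using that unfolding indep_var_eq by (intro indep_setD) auto
  qed
  have restrict_pre: "inputs_on U -` B \<inter> space M = all -` ((\<lambda>f. restrict f U) -` B \<inter> space (cube I)) \<inter> space M"
    and restrict_sets: "(\<lambda>f. restrict f U) -` B \<inter> space (cube I) \<in> sets (cube I)"
    if "U \<subseteq> I" "B \<in> sets (cube U)" for U B
  proof -
    show "inputs_on U -` B \<inter> space M = all -` ((\<lambda>f. restrict f U) -` B \<inter> space (cube I)) \<inter> space M"
      using measurable_space[OF all] by (auto simp: all_def Int_absorb1[OF that(1)])
    show "(\<lambda>f. restrict f U) -` B \<inter> space (cube I) \<in> sets (cube I)"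
      using that by (intro measurable_sets[OF measurable_restrict_subset]) auto
  qed
  show "indep_set (past_gen S) (block_gen T)"
  proof (rule indep_setI)
    show "past_gen S \<subseteq> events" "block_gen T \<subseteq> events"
      using ST past_gen_events block_gen_events by auto
    fix a b assume "a \<in> past_gen S" "b \<in> block_gen T"
    then obtain A B C where A: "A \<in> sets MX" and B: "B \<in> sets (cube S)" and C: "C \<in> sets (cube T)"
      and a: "a = X -` A \<inter> inputs_on S -` B \<inter> space M" and b: "b = inputs_on T -` C \<inter> space M"
      unfolding past_gen_def block_gen_def by blast
    define DB where "DB = (\<lambda>f. restrict f S) -` B \<inter> space (cube I)"
    define DC where "DC = (\<lambda>f. restrict f T) -` C \<inter> space (cube I)"
    have D: "DB \<in> sets (cube I)" "DB \<inter> DC \<in> sets (cube I)"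
      using restrict_sets[OF ST(1) B] restrict_sets[OF ST(2) C] by (auto simp: DB_def DC_def)
    have SB: "inputs_on S -` B \<inter> space M = all -` DB \<inter> space M"
      unfolding DB_def by (rule restrict_pre[OF ST(1) B])
    have TC: "inputs_on T -` C \<inter> space M = all -` DC \<inter> space M"
      unfolding DC_def by (rule restrict_pre[OF ST(2) C])
    have ab: "a \<inter> b = X -` A \<inter> space M \<inter> (all -` (DB \<inter> DC) \<inter> space M)"
      and a': "a = X -` A \<inter> space M \<inter> (all -` DB \<inter> space M)"
      using SB TC unfolding a b by auto
    have "prob (a \<inter> b) = prob (X -` A \<inter> space M) * prob (all -` (DB \<inter> DC) \<inter> space M)"
      unfolding ab by (rule X_all[OF A D(2)])
    also have "all -` (DB \<inter> DC) \<inter> space M = (inputs_on S -` B \<inter> space M) \<inter> b"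
      unfolding SB b TC by blast
    also have "prob \<dots> = prob (inputs_on S -` B \<inter> space M) * prob b"
      unfolding b by (rule S_T[OF B C])
    finally have "prob (a \<inter> b) = prob (X -` A \<inter> space M) * (prob (inputs_on S -` B \<inter> space M) * prob b)" .
    moreover have "prob a = prob (X -` A \<inter> space M) * prob (inputs_on S -` B \<inter> space M)"
      using X_all[OF A D(1)] SB a' by simp
    ultimately show "prob (a \<inter> b) = prob a * prob b"
      by (simp add: mult.assoc)
  qed
  show "Int_stable (past_gen S)"
    unfolding Int_stable_def past_gen_def
  proof safe
    fix A B A' B' assume "A \<in> sets MX" "B \<in> sets (cube S)" "A' \<in> sets MX" "B' \<in> sets (cube S)"
    then show "\<exists>A'' B''. X -` A \<inter> inputs_on S -` B \<inter> space M \<inter> (X -` A' \<inter> inputs_on S -` B' \<inter> space M)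
        = X -` A'' \<inter> inputs_on S -` B'' \<inter> space M \<and> A'' \<in> sets MX \<and> B'' \<in> sets (cube S)"
      by (intro exI[of _ "A \<inter> A'"] exI[of _ "B \<inter> B'"]) auto
  qed
  show "Int_stable (block_gen T)"
    unfolding Int_stable_def block_gen_def
  proof safe
    fix C C' assume "C \<in> sets (cube T)" "C' \<in> sets (cube T)"
    then show "\<exists>C''. inputs_on T -` C \<inter> space M \<inter> (inputs_on T -` C' \<inter> space M)
        = inputs_on T -` C'' \<inter> space M \<and> C'' \<in> sets (cube T)"
      by (intro exI[of _ "C \<inter> C'"]) auto
  qed
qed

lemma indep_var_past_block:
  fixes f g :: "'a \<Rightarrow> real"
  assumes ST: "S \<subseteq> I" "T \<subseteq> I" "S \<inter> T = {}"
    and f: "f \<in> borel_measurable (past S)" and g: "g \<in> borel_measurable (block T)"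
  shows "indep_var borel f borel g"
  unfolding indep_var_eq
proof (intro conjI)
  show "random_variable borel f"
    by (rule measurable_coarser[OF sets_past_events[OF ST(1)] space_past f])
  show "random_variable borel g"
    by (rule measurable_coarser[OF sets_block_events[OF ST(2)] space_block g])
  have "{f -` A \<inter> space M |A. A \<in> sets borel} \<subseteq> sets (past S)"
    using measurable_sets[OF f] by auto
  then have "sigma_sets (space M) {f -` A \<inter> space M |A. A \<in> sets borel} \<subseteq> sets (past S)"
    using sets.sigma_sets_subset[of _ "past S"] by simp
  moreover have "{g -` A \<inter> space M |A. A \<in> sets borel} \<subseteq> sets (block T)"
    using measurable_sets[OF g] by auto
  then have "sigma_sets (space M) {g -` A \<inter> space M |A. A \<in> sets borel} \<subseteq> sets (block T)"
    using sets.sigma_sets_subset[of _ "block T"] by simp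
  ultimately show "indep_set (sigma_sets (space M) {f -` A \<inter> space M |A. A \<in> sets borel})
      (sigma_sets (space M) {g -` A \<inter> space M |A. A \<in> sets borel})"
    by (rule indep_set_mono[OF indep_past_block[OF ST]])
qed

lemma prob_Int_past_block:
  assumes "S \<subseteq> I" "T \<subseteq> I" "S \<inter> T = {}" "A \<in> sets (past S)" "B \<in> sets (block T)"
  shows "prob (A \<inter> B) = prob A * prob B"
  using indep_setD[OF indep_past_block[OF assms(1-3)] assms(4,5)] .

end

section \<open>The noisy sign dynamics on the Erd\<ouml>s random graph process\<close>

type_synonym input = "(nat \<times> nat \<times> nat) + (nat \<times> nat)"

locale erdos_sign_dynamics = prob_space M for M :: "'a measure" +
  fixes N :: nat and \<eta> :: real and adj :: "nat \<Rightarrow> nat \<Rightarrow> nat \<Rightarrow> 'a \<Rightarrow> bool"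
    and \<xi> :: "nat \<Rightarrow> nat \<Rightarrow> 'a \<Rightarrow> real" and x0 :: "'a \<Rightarrow> nat \<Rightarrow> real"
  assumes N_ge_2: "N \<ge> 2" and \<eta>_pos: "\<eta> > 0"
    and adj_sym: "\<forall>k i j. \<forall>\<omega>\<in>space M. adj k i j \<omega> = adj k j i \<omega>"
    and edges: "\<forall>k i j. 1 \<le> i \<longrightarrow> i < j \<longrightarrow> j \<le> N \<longrightarrow>
                  prob {\<omega> \<in> space M. adj k i j \<omega>} = 1 / 2"
    and noise: "\<forall>i k. 1 \<le> i \<longrightarrow> i \<le> N \<longrightarrow>
                  distr M lborel (\<xi> i k) = uniform_measure lborel {-\<eta>..\<eta>}"
    and indep: "indep_vars (\<lambda>_. borel) (basic_family adj \<xi>) (basic_index N)"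
    and x0_vals: "\<forall>\<omega>\<in>space M. \<forall>i\<in>{1..N}. x0 \<omega> i \<in> {1, -1}"
    and x0_indep: "indep_rv M
                  (Pi\<^sub>M {1..N} (\<lambda>_. borel)) (\<lambda>\<omega>. restrict (x0 \<omega>) {1..N})
                  (Pi\<^sub>M (basic_index N) (\<lambda>_. borel))
                  (\<lambda>\<omega>. \<lambda>j\<in>basic_index N. basic_family adj \<xi> j \<omega>)"

context erdos_sign_dynamics
begin

definition init_state :: "'a \<Rightarrow> nat \<Rightarrow> real" where
  "init_state \<omega> = restrict (x0 \<omega>) {1..N}"

definition node_space :: "(nat \<Rightarrow> real) measure" where
  "node_space = Pi\<^sub>M {1..N} (\<lambda>_. borel)"

lemma init_state_apply: "i \<in> {1..N} \<Longrightarrow> init_state \<omega> i = x0 \<omega> i"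
  by (simp add: init_state_def)

sublocale independent_inputs M node_space init_state "basic_family adj \<xi>" "basic_index N"
  using indep x0_indep unfolding init_state_def node_space_def by unfold_locales

definition inputs_before :: "nat \<Rightarrow> input set" where
  "inputs_before k = {j \<in> basic_index N. case j of Inl (t, _, _) \<Rightarrow> t < k | Inr (_, t) \<Rightarrow> t < k}"

definition graph_inputs :: "nat \<Rightarrow> input set" where
  "graph_inputs k = (\<lambda>(i, l). Inl (k, i, l)) ` node_pairs N"

definition noise_inputs :: "nat \<Rightarrow> input set" where
  "noise_inputs k = (\<lambda>i. Inr (i, k)) ` {1..N}"

lemma inputs_before_subset: "inputs_before k \<subseteq> basic_index N"
  by (auto simp: inputs_before_def)

lemma inputs_before_mono: "k \<le> k' \<Longrightarrow> inputs_before k \<subseteq> inputs_before k'"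
  by (auto simp: inputs_before_def split: sum.splits)

lemma graph_inputs_subset: "graph_inputs k \<subseteq> inputs_before (Suc k)"
  by (auto simp: graph_inputs_def inputs_before_def node_pairs_def basic_index_def)

lemma noise_inputs_subset: "noise_inputs k \<subseteq> inputs_before (Suc k)"
  by (auto simp: noise_inputs_def inputs_before_def basic_index_def)

lemma step_inputs_subset: "graph_inputs k \<union> noise_inputs k \<subseteq> basic_index N"
  using graph_inputs_subset[of k] noise_inputs_subset[of k] inputs_before_subset[of "Suc k"] by blast

lemma inputs_before_disjoint: "inputs_before k \<inter> (graph_inputs k \<union> noise_inputs k) = {}"
  by (auto simp: inputs_before_def graph_inputs_def noise_inputs_def)

lemma finite_graph_inputs: "finite (graph_inputs k)"
  by (simp add: graph_inputs_def finite_node_pairs)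

lemma finite_noise_inputs: "finite (noise_inputs k)"
  by (simp add: noise_inputs_def)

lemma graph_inputs_nonempty: "graph_inputs k \<noteq> {}"
proof -
  have "(1, 2) \<in> node_pairs N" using N_ge_2 by (simp add: node_pairs_def)
  then show ?thesis by (auto simp: graph_inputs_def)
qed

lemma card_graph_inputs: "card (graph_inputs k) = card (node_pairs N)"
  unfolding graph_inputs_def by (rule card_image) (auto simp: inj_on_def)

lemma card_noise_inputs: "card (noise_inputs k) = N"
  unfolding noise_inputs_def by (subst card_image) (auto simp: inj_on_def)

abbreviation st :: "nat \<Rightarrow> 'a \<Rightarrow> nat \<Rightarrow> real" where
  "st k \<omega> i \<equiv> state N adj \<xi> x0 k \<omega> i"

definition graph_at :: "nat \<Rightarrow> 'a \<Rightarrow> nat \<Rightarrow> nat \<Rightarrow> bool" where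
  "graph_at k \<omega> = (\<lambda>a b. adj k a b \<omega>)"

definition avg :: "nat \<Rightarrow> nat \<Rightarrow> 'a \<Rightarrow> real" where
  "avg k i \<omega> = local_avg N (graph_at k \<omega>) (st k \<omega>) i"

lemma st_0: "st 0 \<omega> i = x0 \<omega> i"
  by (simp add: state_def)

lemma st_Suc: "st (Suc k) \<omega> i = sgn (avg k i \<omega> + \<xi> i k \<omega>)"
  by (simp add: state_def avg_def graph_at_def)

lemma st_vals:
  assumes "\<omega> \<in> space M" "i \<in> {1..N}"
  shows "st k \<omega> i \<in> {-1, 0, 1}"
proof (cases k)
  case 0
  have "x0 \<omega> i \<in> {1, -1}" using x0_vals assms by blast
  then show ?thesis using 0 by (auto simp: st_0)
qed (auto simp: st_Suc sgn_if)

lemma st_abs_le: "\<omega> \<in> space M \<Longrightarrow> i \<in> {1..N} \<Longrightarrow> \<bar>st k \<omega> i\<bar> \<le> 1"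
  by (drule st_vals[of _ _ k]) auto

lemma avg_weighted_sum: "avg k i \<omega> = (\<Sum>j\<in>{1..N}. st k \<omega> j * nbhd_weight N (graph_at k \<omega>) i j)"
  unfolding avg_def by (rule local_avg_weighted_sum)

lemma avg_abs_le: "\<omega> \<in> space M \<Longrightarrow> i \<in> {1..N} \<Longrightarrow> \<bar>avg k i \<omega>\<bar> \<le> 1"
  unfolding avg_def using st_abs_le by (intro local_avg_abs_le)

lemma avg_in_grid: "\<omega> \<in> space M \<Longrightarrow> i \<in> {1..N} \<Longrightarrow> avg k i \<omega> \<in> avg_grid N"
  unfolding avg_def using st_vals by (intro local_avg_in_grid) auto

lemma noise_uniform: "i \<in> {1..N} \<Longrightarrow> uniform_rv M (\<xi> i k) \<eta>"
proof
  assume i: "i \<in> {1..N}"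
  show "\<xi> i k \<in> borel_measurable M"
    using input_measurable[of "Inr (i, k)"] i by (simp add: basic_index_def basic_family_def)
  show "distr M lborel (\<xi> i k) = uniform_measure lborel {-\<eta>..\<eta>}"
    using noise i by simp
qed (rule \<eta>_pos)

subsection \<open>The random graph at time k\<close>

definition edges_at :: "nat \<Rightarrow> 'a \<Rightarrow> nat set set" where
  "edges_at k \<omega> = (\<lambda>(a, b). {a, b}) ` {p \<in> node_pairs N. adj k (fst p) (snd p) \<omega>}"

lemma edges_at_subset: "edges_at k \<omega> \<subseteq> all_edges N"
  by (auto simp: edges_at_def all_edges_def)

lemma adj_iff_edge:
  assumes "\<omega> \<in> space M" "i \<in> {1..N}" "j \<in> {1..N}" "i \<noteq> j"
  shows "adj k i j \<omega> \<longleftrightarrow> {i, j} \<in> edges_at k \<omega>"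
proof
  assume "{i, j} \<in> edges_at k \<omega>"
  then obtain a b where "(a, b) \<in> node_pairs N" "adj k a b \<omega>" "{i, j} = {a, b}"
    by (auto simp: edges_at_def)
  then show "adj k i j \<omega>"
    using adj_sym assms(1) by (auto simp: doubleton_eq_iff)
next
  assume ij: "adj k i j \<omega>"
  consider "i < j" | "j < i" using assms(4) by linarith
  then show "{i, j} \<in> edges_at k \<omega>"
  proof cases
    case 1
    then show ?thesis
      using ij assms unfolding edges_at_def by (intro rev_image_eqI[of "(i, j)"]) (auto simp: node_pairs_def)
  next
    case 2
    then show ?thesis
      using ij assms adj_sym unfolding edges_at_def
      by (intro rev_image_eqI[of "(j, i)"]) (auto simp: node_pairs_def insert_commute)
  qed
qed

lemma nbhd_graph_at:
  "\<omega> \<in> space M \<Longrightarrow> i \<in> {1..N} \<Longrightarrow> nbhd N (graph_at k \<omega>) i = nbhd N (edge_rel (edges_at k \<omega>)) i"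
  by (rule nbhd_cong) (simp add: graph_at_def edge_rel_def adj_iff_edge)

definition edge_value :: "nat set set \<Rightarrow> input \<Rightarrow> real set" where
  "edge_value E j = (case j of Inl (_, a, b) \<Rightarrow> {of_bool ({a, b} \<in> E)} | Inr _ \<Rightarrow> {})"

definition graph_event :: "nat \<Rightarrow> nat set set \<Rightarrow> 'a set" where
  "graph_event k E = (\<Inter>j\<in>graph_inputs k. basic_family adj \<xi> j -` edge_value E j \<inter> space M)"

lemma graph_event_iff:
  assumes \<omega>: "\<omega> \<in> space M" and E: "E \<subseteq> all_edges N"
  shows "\<omega> \<in> graph_event k E \<longleftrightarrow> edges_at k \<omega> = E"
proof -
  define edge where "edge = (\<lambda>(a, b). {a, b} :: nat set)"
  have E_eq: "E = edge ` {p \<in> node_pairs N. edge p \<in> E}"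
    using E unfolding all_edges_def edge_def by blast
  have inj: "inj_on edge (node_pairs N)"
    unfolding edge_def by (rule inj_on_pair_edge)
  have "\<omega> \<in> graph_event k E \<longleftrightarrow> (\<forall>(a, b)\<in>node_pairs N. adj k a b \<omega> \<longleftrightarrow> {a, b} \<in> E)"
    using \<omega> by (auto simp: graph_event_def graph_inputs_def edge_value_def basic_family_def)
  also have "\<dots> \<longleftrightarrow> (\<forall>p\<in>node_pairs N. adj k (fst p) (snd p) \<omega> \<longleftrightarrow> edge p \<in> E)"
    by (auto simp: edge_def)
  also have "\<dots> \<longleftrightarrow> {p \<in> node_pairs N. adj k (fst p) (snd p) \<omega>} = {p \<in> node_pairs N. edge p \<in> E}"
    by blast
  also have "\<dots> \<longleftrightarrow> edges_at k \<omega> = E"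
    unfolding edges_at_def edge_def[symmetric]
    by (subst (2) E_eq, rule inj_on_image_eq_iff[OF inj, symmetric]) auto
  finally show ?thesis .
qed

lemma edge_value_borel: "edge_value E j \<in> sets borel"
  by (auto simp: edge_value_def split: sum.splits)

lemma graph_event_past:
  "S \<subseteq> basic_index N \<Longrightarrow> graph_inputs k \<subseteq> S \<Longrightarrow> graph_event k E \<in> sets (past S)"
  unfolding graph_event_def
  by (intro input_event_past finite_graph_inputs graph_inputs_nonempty edge_value_borel)

lemma graph_event_block: "graph_event k E \<in> sets (block (graph_inputs k))"
  unfolding graph_event_def
  by (intro input_event_block finite_graph_inputs graph_inputs_nonempty edge_value_borel order_refl)

lemma graph_event_events: "graph_event k E \<in> events"
  using graph_event_block sets_block_events graph_inputs_subset inputs_before_subset by blast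

lemma prob_edge_value:
  assumes "j \<in> graph_inputs k"
  shows "prob (basic_family adj \<xi> j -` edge_value E j \<inter> space M) = 1 / 2"
proof -
  obtain a b where ab: "(a, b) \<in> node_pairs N" "j = Inl (k, a, b)"
    using assms by (auto simp: graph_inputs_def)
  define A where "A = {\<omega> \<in> space M. adj k a b \<omega>}"
  have "basic_family adj \<xi> j -` {1} \<inter> space M \<in> events"
    using assms graph_inputs_subset inputs_before_subset
    by (intro measurable_sets[OF input_measurable]) auto
  moreover have "basic_family adj \<xi> j -` {1} \<inter> space M = A"
    using ab by (auto simp: basic_family_def A_def)
  ultimately have A_ev: "A \<in> events" by simp
  have pA: "prob A = 1 / 2"
    using edges ab by (auto simp: node_pairs_def A_def)
  show ?thesis
  proof (cases "{a, b} \<in> E")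
    case True
    then have "basic_family adj \<xi> j -` edge_value E j \<inter> space M = A"
      using ab by (auto simp: basic_family_def edge_value_def A_def)
    then show ?thesis using pA by simp
  next
    case False
    then have "basic_family adj \<xi> j -` edge_value E j \<inter> space M = space M - A"
      using ab by (auto simp: basic_family_def edge_value_def A_def)
    then show ?thesis using pA prob_compl[OF A_ev] by simp
  qed
qed

lemma prob_graph_event: "prob (graph_event k E) = (1 / 2) ^ card (node_pairs N)"
proof -
  have "prob (graph_event k E) = (\<Prod>j\<in>graph_inputs k. prob (basic_family adj \<xi> j -` edge_value E j \<inter> space M))"
    unfolding graph_event_def using graph_inputs_subset inputs_before_subset
    by (intro indep_varsD[OF indep] finite_graph_inputs graph_inputs_nonempty edge_value_borel) auto
  also have "\<dots> = (1 / 2) ^ card (node_pairs N)"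
    by (simp add: prob_edge_value card_graph_inputs)
  finally show ?thesis .
qed

lemma weight_decomp:
  assumes \<omega>: "\<omega> \<in> space M" and i: "i \<in> {1..N}"
  shows "nbhd_weight N (graph_at k \<omega>) i j
       = (\<Sum>E\<in>Pow (all_edges N). indicator (graph_event k E) \<omega> * nbhd_weight N (edge_rel E) i j)"
proof -
  have "(\<Sum>E\<in>Pow (all_edges N). indicator (graph_event k E) \<omega> * nbhd_weight N (edge_rel E) i j)
      = (\<Sum>E\<in>Pow (all_edges N). of_bool (E = edges_at k \<omega>) * nbhd_weight N (edge_rel E) i j)"
    using graph_event_iff[OF \<omega>] by (intro sum.cong) (auto simp: indicator_def)
  also have "\<dots> = nbhd_weight N (edge_rel (edges_at k \<omega>)) i j"
    using edges_at_subset finite_all_edges by (intro sum_of_bool_select) auto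
  also have "\<dots> = nbhd_weight N (graph_at k \<omega>) i j"
    unfolding nbhd_weight_def nbhd_graph_at[OF \<omega> i] ..
  finally show ?thesis ..
qed

lemma weight_measurable:
  assumes Q: "space Q = space M" "\<And>E. graph_event k E \<in> sets Q" and i: "i \<in> {1..N}"
  shows "(\<lambda>\<omega>. nbhd_weight N (graph_at k \<omega>) i j) \<in> borel_measurable Q"
proof -
  have "(\<lambda>\<omega>. \<Sum>E\<in>Pow (all_edges N). indicator (graph_event k E) \<omega> * nbhd_weight N (edge_rel E) i j)
      \<in> borel_measurable Q"
    using Q(2) by (intro borel_measurable_sum borel_measurable_times borel_measurable_indicator) auto
  then show ?thesis
    using weight_decomp[OF _ i] Q(1) by (subst measurable_cong) auto
qed

lemma expected_weight:
  assumes i: "i \<in> {1..N}"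
  shows "(\<integral>\<omega>. nbhd_weight N (graph_at k \<omega>) i j \<partial>M)
       = (\<Sum>E\<in>Pow (all_edges N). nbhd_weight N (edge_rel E) i j) / 2 ^ card (node_pairs N)"
proof -
  have "(\<integral>\<omega>. nbhd_weight N (graph_at k \<omega>) i j \<partial>M)
      = (\<integral>\<omega>. (\<Sum>E\<in>Pow (all_edges N). indicator (graph_event k E) \<omega> * nbhd_weight N (edge_rel E) i j) \<partial>M)"
    using weight_decomp[OF _ i] by (intro Bochner_Integration.integral_cong) auto
  also have "\<dots> = (\<Sum>E\<in>Pow (all_edges N). prob (graph_event k E) * nbhd_weight N (edge_rel E) i j)"
    using graph_event_events
    by (simp add: Bochner_Integration.integral_sum less_top[symmetric]
                  Int_absorb2 sets.sets_into_space)
  finally show ?thesis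
    by (simp add: prob_graph_event sum_divide_distrib power_one_over)
qed

subsection \<open>Measurability: the state at time k depends only on earlier inputs\<close>

lemma avg_measurable:
  assumes Q: "space Q = space M" "\<And>E. graph_event k E \<in> sets Q"
    and st: "\<And>j. j \<in> {1..N} \<Longrightarrow> (\<lambda>\<omega>. st k \<omega> j) \<in> borel_measurable Q" and i: "i \<in> {1..N}"
  shows "avg k i \<in> borel_measurable Q"
proof -
  have "avg k i = (\<lambda>\<omega>. \<Sum>j\<in>{1..N}. st k \<omega> j * nbhd_weight N (graph_at k \<omega>) i j)"
    by (rule ext) (rule avg_weighted_sum)
  also have "\<dots> \<in> borel_measurable Q"
    using st weight_measurable[OF Q i] by (intro borel_measurable_sum borel_measurable_times)
  finally show ?thesis .
qed

lemma st_measurable_past: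
  assumes S: "S \<subseteq> basic_index N" and "inputs_before k \<subseteq> S" and "i \<in> {1..N}"
  shows "(\<lambda>\<omega>. st k \<omega> i) \<in> borel_measurable (past S)"
  using assms(2,3)
proof (induction k arbitrary: i)
  case 0
  have "(\<lambda>\<omega>. init_state \<omega> i) \<in> borel_measurable (past S)"
    using init_measurable_past[OF S] measurable_component_singleton[OF 0(2)]
    unfolding node_space_def by (rule measurable_compose)
  then show ?case using 0(2) by (simp add: st_0 init_state_apply)
next
  case (Suc k)
  have "Inr (i, k) \<in> noise_inputs k"
    using Suc.prems(2) by (simp add: noise_inputs_def)
  then have before: "inputs_before k \<subseteq> S" and graph: "graph_inputs k \<subseteq> S" and noise: "Inr (i, k) \<in> S"
    using Suc.prems(1) inputs_before_mono[of k "Suc k"] graph_inputs_subset[of k] noise_inputs_subset[of k]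
    by auto
  have "avg k i \<in> borel_measurable (past S)"
    using Suc.IH[OF before] graph_event_past[OF S graph] Suc.prems(2) by (intro avg_measurable) auto
  moreover have "\<xi> i k \<in> borel_measurable (past S)"
    using input_measurable_past[OF S noise] by (simp add: basic_family_def)
  ultimately have "(\<lambda>\<omega>. sgn (avg k i \<omega> + \<xi> i k \<omega>)) \<in> borel_measurable (past S)"
    by (intro measurable_compose[OF borel_measurable_add borel_measurable_sgn])
  then show ?case
    by (simp only: st_Suc)
qed

lemma avg_measurable_past:
  assumes "S \<subseteq> basic_index N" "inputs_before k \<union> graph_inputs k \<subseteq> S" "i \<in> {1..N}"
  shows "avg k i \<in> borel_measurable (past S)"
  using assms by (intro avg_measurable st_measurable_past graph_event_past) auto

lemma st_measurable: "i \<in> {1..N} \<Longrightarrow> (\<lambda>\<omega>. st k \<omega> i) \<in> borel_measurable M"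
  by (rule measurable_coarser[OF sets_past_events space_past st_measurable_past])
     (use inputs_before_subset in auto)

lemma st_integrable: "i \<in> {1..N} \<Longrightarrow> integrable M (\<lambda>\<omega>. st k \<omega> i)"
  using st_abs_le by (intro integrable_const_bound[where B = 1] st_measurable) auto

subsection \<open>The mean state sum for \<eta> > 1\<close>

text \<open>Given the past, the noise at node i is independent of the local average, and a
  uniform noise turns a local average v into a mean next state v/\<eta>.\<close>

lemma expected_st_Suc:
  assumes i: "i \<in> {1..N}" and \<eta>: "1 < \<eta>"
  shows "(\<integral>\<omega>. st (Suc k) \<omega> i \<partial>M) = (\<integral>\<omega>. avg k i \<omega> \<partial>M) / \<eta>"
proof -
  interpret noise: uniform_rv M "\<xi> i k" \<eta>
    by (rule noise_uniform[OF i])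
  have S: "inputs_before k \<union> graph_inputs k \<subseteq> basic_index N"
    using inputs_before_subset inputs_before_mono[of k "Suc k"] graph_inputs_subset by blast
  have T: "{Inr (i, k)} \<subseteq> basic_index N" and disj: "(inputs_before k \<union> graph_inputs k) \<inter> {Inr (i, k)} = {}"
    using i by (auto simp: basic_index_def inputs_before_def graph_inputs_def)
  have "\<xi> i k \<in> borel_measurable (block {Inr (i, k)})"
    using input_measurable_block[of "Inr (i, k)"] by (simp add: basic_family_def)
  then have indep: "indep_var borel (avg k i) borel (\<xi> i k)"
    by (rule indep_var_past_block[OF S T disj avg_measurable_past[OF S order_refl i]])
  have sgn_shift: "(\<lambda>y. sgn (a + y)) \<in> borel_measurable borel" for a :: real
    by (intro measurable_compose[OF _ borel_measurable_sgn]) simp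
  have "(\<integral>\<omega>. st (Suc k) \<omega> i \<partial>M) = (\<integral>\<omega>. sgn (avg k i \<omega> + \<xi> i k \<omega>) \<partial>M)"
    by (simp add: st_Suc)
  also have "\<dots> = (\<integral>\<omega>. (\<integral>\<omega>'. sgn (avg k i \<omega> + \<xi> i k \<omega>') \<partial>M) \<partial>M)"
    using avg_in_grid[OF _ i]
    by (intro integral_indep_finite_valued[OF indep finite_avg_grid, where B = 1] sgn_shift)
       (auto simp: sgn_if)
  also have "\<dots> = (\<integral>\<omega>. avg k i \<omega> / \<eta> \<partial>M)"
    using avg_abs_le[OF _ i] \<eta>
    by (intro Bochner_Integration.integral_cong refl noise.expectation_sgn_shift)
       (meson less_imp_le order_trans)
  finally show ?thesis by simp
qed

text \<open>The state at time k is independent of the graph G(k), so the mean local average is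
  the mean state weighted by the mean weights.\<close>

lemma expected_avg:
  assumes i: "i \<in> {1..N}"
  shows "(\<integral>\<omega>. avg k i \<omega> \<partial>M)
       = (\<Sum>j\<in>{1..N}. (\<integral>\<omega>. st k \<omega> j \<partial>M) * (\<integral>\<omega>. nbhd_weight N (graph_at k \<omega>) i j \<partial>M))"
proof -
  have G: "graph_inputs k \<subseteq> basic_index N" and disj: "inputs_before k \<inter> graph_inputs k = {}"
    using graph_inputs_subset inputs_before_subset inputs_before_disjoint by blast+
  have indep: "indep_var borel (\<lambda>\<omega>. st k \<omega> j) borel (\<lambda>\<omega>. nbhd_weight N (graph_at k \<omega>) i j)"
    if j: "j \<in> {1..N}" for j
    using st_measurable_past[OF inputs_before_subset order_refl j]
      weight_measurable[OF space_block graph_event_block i]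
    by (rule indep_var_past_block[OF inputs_before_subset G disj])
  have int_w: "integrable M (\<lambda>\<omega>. nbhd_weight N (graph_at k \<omega>) i j)" for j
    using weight_measurable[OF refl graph_event_events i] nbhd_weight_bounds[OF i]
    by (intro integrable_const_bound[where B = 1]) auto
  have "(\<integral>\<omega>. avg k i \<omega> \<partial>M) = (\<integral>\<omega>. (\<Sum>j\<in>{1..N}. st k \<omega> j * nbhd_weight N (graph_at k \<omega>) i j) \<partial>M)"
    by (simp add: avg_weighted_sum)
  also have "\<dots> = (\<Sum>j\<in>{1..N}. (\<integral>\<omega>. st k \<omega> j * nbhd_weight N (graph_at k \<omega>) i j \<partial>M))"
    using indep st_integrable int_w by (intro Bochner_Integration.integral_sum indep_var_integrable)
  also have "\<dots> = (\<Sum>j\<in>{1..N}. (\<integral>\<omega>. st k \<omega> j \<partial>M) * (\<integral>\<omega>. nbhd_weight N (graph_at k \<omega>) i j \<partial>M))"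
    using indep st_integrable int_w by (intro sum.cong refl indep_var_lebesgue_integral)
  finally show ?thesis .
qed

lemma expected_state_sum: "integral\<^sup>L M (state_sum N adj \<xi> x0 k) = (\<Sum>i\<in>{1..N}. \<integral>\<omega>. st k \<omega> i \<partial>M)"
  unfolding state_sum_def by (intro Bochner_Integration.integral_sum st_integrable)

text \<open>One step of the mean dynamics: averaged over the uniform random graph, the weight
  matrix is doubly stochastic, so the mean state sum is only damped by the factor 1/\<eta>.\<close>

lemma expected_state_sum_Suc:
  assumes \<eta>: "1 < \<eta>"
  shows "integral\<^sup>L M (state_sum N adj \<xi> x0 (Suc k)) = integral\<^sup>L M (state_sum N adj \<xi> x0 k) / \<eta>"
proof -
  define c where "c = (2::real) ^ card (node_pairs N)"
  define m where "m j = (\<integral>\<omega>. st k \<omega> j \<partial>M)" for j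
  define W where "W i j = (\<Sum>E\<in>Pow (all_edges N). nbhd_weight N (edge_rel E) i j)" for i j
  have "integral\<^sup>L M (state_sum N adj \<xi> x0 (Suc k)) = (\<Sum>i\<in>{1..N}. (\<Sum>j\<in>{1..N}. m j * (W i j / c)) / \<eta>)"
    unfolding expected_state_sum
    by (intro sum.cong refl) (simp add: expected_st_Suc \<eta> expected_avg expected_weight m_def W_def c_def)
  also have "\<dots> = (\<Sum>i\<in>{1..N}. \<Sum>j\<in>{1..N}. m j * (W i j / c)) / \<eta>"
    by (rule sum_divide_distrib[symmetric])
  also have "(\<Sum>i\<in>{1..N}. \<Sum>j\<in>{1..N}. m j * (W i j / c)) = (\<Sum>j\<in>{1..N}. \<Sum>i\<in>{1..N}. m j * (W i j / c))"
    by (rule sum.swap)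
  also have "\<dots> = (\<Sum>j\<in>{1..N}. m j * ((\<Sum>i\<in>{1..N}. W i j) / c))"
    by (simp add: sum_distrib_left sum_divide_distrib)
  also have "\<dots> = (\<Sum>j\<in>{1..N}. m j)"
  proof (intro sum.cong refl)
    fix j assume "j \<in> {1..N}"
    then have "(\<Sum>i\<in>{1..N}. W i j) = c"
      unfolding W_def c_def by (rule sum_nbhd_weight_column)
    then show "m j * ((\<Sum>i\<in>{1..N}. W i j) / c) = m j"
      by (simp add: c_def)
  qed
  finally show ?thesis
    unfolding expected_state_sum m_def .
qed

lemma expected_state_sum_geometric:
  assumes \<eta>: "1 < \<eta>"
  shows "integral\<^sup>L M (state_sum N adj \<xi> x0 k) = \<eta> powi (- int k) * integral\<^sup>L M (state_sum N adj \<xi> x0 0)"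
  by (rule geometric_decay[where f = "\<lambda>k. integral\<^sup>L M (state_sum N adj \<xi> x0 k)"])
     (rule expected_state_sum_Suc[OF \<eta>])

lemma expected_state_sum_tendsto_zero:
  assumes \<eta>: "1 < \<eta>"
  shows "(\<lambda>k. integral\<^sup>L M (state_sum N adj \<xi> x0 k)) \<longlonglongrightarrow> 0"
proof -
  have "(\<lambda>k. integral\<^sup>L M (state_sum N adj \<xi> x0 k))
      = (\<lambda>k. \<eta> powi (- int k) * integral\<^sup>L M (state_sum N adj \<xi> x0 0))"
    by (intro ext expected_state_sum_geometric[OF \<eta>])
  then show ?thesis
    using geometric_decay_tendsto_zero[OF \<eta>] by (simp only:)
qed

subsection \<open>Agreement for \<eta> \<le> 1\<close>

definition consensus :: "nat \<Rightarrow> 'a \<Rightarrow> bool" where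
  "consensus t \<omega> \<longleftrightarrow> (\<forall>i\<in>{1..N}. st t \<omega> i = 1) \<or> (\<forall>i\<in>{1..N}. st t \<omega> i = -1)"

text \<open>If the noise stays strictly inside (-1,1), a consensus is never left: every local
  average equals the common value c = \<plusminus>1, and c + \<xi> has the sign of c.\<close>

lemma consensus_absorbing:
  assumes C: "consensus t \<omega>" and noise: "\<forall>i\<in>{1..N}. \<forall>k. -1 < \<xi> i k \<omega> \<and> \<xi> i k \<omega> < 1"
  shows "\<exists>c\<in>{1, -1::real}. \<exists>K. \<forall>k\<ge>K. \<forall>i\<in>{1..N}. st k \<omega> i = c"
proof -
  obtain c where c: "c \<in> {1, -1::real}" "\<forall>i\<in>{1..N}. st t \<omega> i = c"
    using C unfolding consensus_def by auto
  have "\<forall>i\<in>{1..N}. st k \<omega> i = c" if "t \<le> k" for k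
    using that
  proof (induction rule: dec_induct)
    case (step k)
    show ?case
    proof
      fix i assume i: "i \<in> {1..N}"
      have "avg k i \<omega> = c"
        unfolding avg_def using step.IH i by (intro local_avg_const) auto
      moreover have "-1 < \<xi> i k \<omega> \<and> \<xi> i k \<omega> < 1"
        using noise i by blast
      ultimately show "st (Suc k) \<omega> i = c"
        using c(1) by (auto simp: st_Suc sgn_if)
    qed
  qed (use c in simp)
  then show ?thesis using c(1) by blast
qed

text \<open>The synchronising event at time k: G(k) is complete and all noises at time k have
  sign b.  It forces a consensus at time k + 1 when b is the sign of the state sum.\<close>

definition sync_value :: "bool \<Rightarrow> input \<Rightarrow> real set" where
  "sync_value b j = (case j of Inl _ \<Rightarrow> {1} | Inr _ \<Rightarrow> if b then {0<..} else {..<0})"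

definition sync_event :: "bool \<Rightarrow> nat \<Rightarrow> 'a set" where
  "sync_event b k =
     (\<Inter>j\<in>graph_inputs k \<union> noise_inputs k. basic_family adj \<xi> j -` sync_value b j \<inter> space M)"

lemma sync_event_mem:
  assumes "\<omega> \<in> sync_event b k" "j \<in> graph_inputs k \<union> noise_inputs k"
  shows "basic_family adj \<xi> j \<omega> \<in> sync_value b j"
  using assms unfolding sync_event_def by blast

lemma sync_event_space: "sync_event b k \<subseteq> space M"
  using graph_inputs_nonempty by (auto simp: sync_event_def)

lemma sync_event_complete:
  assumes \<omega>: "\<omega> \<in> sync_event b k" and ij: "i \<in> {1..N}" "j \<in> {1..N}" "i \<noteq> j"
  shows "adj k i j \<omega>"
proof -
  have edge: "adj k a c \<omega>" if "(a, c) \<in> node_pairs N" for a c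
  proof -
    have "Inl (k, a, c) \<in> graph_inputs k \<union> noise_inputs k"
      using that by (auto simp: graph_inputs_def)
    then show ?thesis
      using sync_event_mem[OF \<omega>] by (force simp: basic_family_def sync_value_def)
  qed
  consider "i < j" | "j < i" using ij(3) by linarith
  then show ?thesis
  proof cases
    case 1
    then show ?thesis using edge[of i j] ij by (simp add: node_pairs_def)
  next
    case 2
    then have "adj k j i \<omega>" using edge[of j i] ij by (simp add: node_pairs_def)
    then show ?thesis using adj_sym \<omega> sync_event_space by blast
  qed
qed

lemma sync_event_noise:
  assumes \<omega>: "\<omega> \<in> sync_event b k" and i: "i \<in> {1..N}"
  shows "if b then \<xi> i k \<omega> > 0 else \<xi> i k \<omega> < 0"
proof -
  have "Inr (i, k) \<in> graph_inputs k \<union> noise_inputs k"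
    using i by (auto simp: noise_inputs_def)
  then have "basic_family adj \<xi> (Inr (i, k)) \<omega> \<in> sync_value b (Inr (i, k))"
    by (rule sync_event_mem[OF \<omega>])
  then show ?thesis
    by (cases b) (auto simp: basic_family_def sync_value_def)
qed

lemma sync_event_consensus:
  assumes \<omega>: "\<omega> \<in> sync_event b k" and b: "b \<longleftrightarrow> 0 \<le> (\<Sum>j\<in>{1..N}. st k \<omega> j)"
  shows "consensus (Suc k) \<omega>"
proof -
  have avg: "avg k i \<omega> = (\<Sum>j\<in>{1..N}. st k \<omega> j) / real N" if "i \<in> {1..N}" for i
    unfolding avg_def using that sync_event_complete[OF \<omega> that]
    by (intro local_avg_complete) (auto simp: graph_at_def)
  have N: "real N > 0" using N_ge_2 by simp
  show ?thesis
  proof (cases b)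
    case True
    have "st (Suc k) \<omega> i = 1" if "i \<in> {1..N}" for i
    proof -
      have "0 \<le> avg k i \<omega>" and "0 < \<xi> i k \<omega>"
        using avg[OF that] b True N sync_event_noise[OF \<omega> that] by simp_all
      then show ?thesis by (simp add: st_Suc)
    qed
    then show ?thesis unfolding consensus_def by blast
  next
    case False
    have "st (Suc k) \<omega> i = -1" if "i \<in> {1..N}" for i
    proof -
      have "avg k i \<omega> < 0" and "\<xi> i k \<omega> < 0"
        using avg[OF that] b False N sync_event_noise[OF \<omega> that] by (simp_all add: divide_neg_pos)
      then show ?thesis by (simp add: st_Suc)
    qed
    then show ?thesis unfolding consensus_def by blast
  qed
qed

definition sync_prob :: real where
  "sync_prob = (1 / 2) ^ (card (node_pairs N) + N)"

text \<open>The synchronising event is determined by the inputs of time k and has probability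
  q = 2^-(card (node_pairs N) + N): each edge is present and each noise has the sign b
  with probability 1/2.\<close>

lemma sync_value_borel: "sync_value b j \<in> sets borel"
  by (auto simp: sync_value_def split: sum.splits)

lemma sync_event_block: "sync_event b k \<in> sets (block (graph_inputs k \<union> noise_inputs k))"
  unfolding sync_event_def using graph_inputs_nonempty
  by (intro input_event_block sync_value_borel order_refl)
     (auto simp: finite_graph_inputs finite_noise_inputs)

lemma prob_sync_value:
  assumes j: "j \<in> graph_inputs k \<union> noise_inputs k"
  shows "prob (basic_family adj \<xi> j -` sync_value b j \<inter> space M) = 1 / 2"
proof (cases "j \<in> graph_inputs k")
  case True
  then obtain a c where ac: "(a, c) \<in> node_pairs N" "j = Inl (k, a, c)"
    by (auto simp: graph_inputs_def)
  then have "basic_family adj \<xi> j -` sync_value b j \<inter> space M = {\<omega> \<in> space M. adj k a c \<omega>}"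
    by (auto simp: basic_family_def sync_value_def)
  then show ?thesis using edges ac by (auto simp: node_pairs_def)
next
  case False
  then obtain i where i: "i \<in> {1..N}" "j = Inr (i, k)"
    using j by (auto simp: noise_inputs_def)
  interpret noise: uniform_rv M "\<xi> i k" \<eta>
    by (rule noise_uniform[OF i(1)])
  show ?thesis
    using i \<eta>_pos noise.prob_greater[of 0] noise.prob_less[of 0]
    by (cases b) (auto simp: basic_family_def sync_value_def)
qed

lemma prob_sync_event: "prob (sync_event b k) = sync_prob"
proof -
  have disj: "graph_inputs k \<inter> noise_inputs k = {}"
    by (auto simp: graph_inputs_def noise_inputs_def)
  have "prob (sync_event b k)
      = (\<Prod>j\<in>graph_inputs k \<union> noise_inputs k. prob (basic_family adj \<xi> j -` sync_value b j \<inter> space M))"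
    unfolding sync_event_def using step_inputs_subset graph_inputs_nonempty
    by (intro indep_varsD[OF indep] sync_value_borel) (auto simp: finite_graph_inputs finite_noise_inputs)
  also have "\<dots> = (1 / 2) ^ card (graph_inputs k \<union> noise_inputs k)"
    by (simp add: prob_sync_value)
  also have "card (graph_inputs k \<union> noise_inputs k) = card (node_pairs N) + N"
    using card_Un_disjoint[OF finite_graph_inputs finite_noise_inputs disj]
    by (simp add: card_graph_inputs card_noise_inputs)
  finally show ?thesis unfolding sync_prob_def .
qed

lemma st_level_past:
  assumes "S \<subseteq> basic_index N" "inputs_before t \<subseteq> S" "i \<in> {1..N}"
  shows "{\<omega> \<in> space M. st t \<omega> i = c} \<in> sets (past S)"
proof -
  have "(\<lambda>\<omega>. st t \<omega> i) -` {c} \<inter> space (past S) \<in> sets (past S)"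
    using st_measurable_past[OF assms] by (rule measurable_sets) simp
  then show ?thesis by (simp add: vimage_def Int_def conj_commute)
qed

lemma consensus_past:
  assumes S: "S \<subseteq> basic_index N" "inputs_before t \<subseteq> S"
  shows "{\<omega> \<in> space M. consensus t \<omega>} \<in> sets (past S)"
proof -
  have all: "{\<omega> \<in> space M. \<forall>i\<in>{1..N}. st t \<omega> i = c} \<in> sets (past S)" for c
  proof -
    have "(\<Inter>i\<in>{1..N}. {\<omega> \<in> space M. st t \<omega> i = c}) \<in> sets (past S)"
      using N_ge_2 st_level_past[OF S] by (intro sets.finite_INT) auto
    moreover have "(1::nat) \<in> {1..N}" using N_ge_2 by simp
    then have "(\<Inter>i\<in>{1..N}. {\<omega> \<in> space M. st t \<omega> i = c}) = {\<omega> \<in> space M. \<forall>i\<in>{1..N}. st t \<omega> i = c}"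
      by blast
    ultimately show ?thesis by simp
  qed
  have "{\<omega> \<in> space M. consensus t \<omega>}
      = {\<omega> \<in> space M. \<forall>i\<in>{1..N}. st t \<omega> i = 1} \<union> {\<omega> \<in> space M. \<forall>i\<in>{1..N}. st t \<omega> i = -1}"
    unfolding consensus_def by auto
  then show ?thesis using all by auto
qed

definition no_consensus :: "nat \<Rightarrow> 'a set" where
  "no_consensus k = {\<omega> \<in> space M. \<forall>t\<le>k. \<not> consensus t \<omega>}"

lemma no_consensus_past: "no_consensus k \<in> sets (past (inputs_before k))"
proof -
  have "no_consensus k = space M - (\<Union>t\<in>{..k}. {\<omega> \<in> space M. consensus t \<omega>})"
    unfolding no_consensus_def by auto
  also have "\<dots> \<in> sets (past (inputs_before k))"
    using consensus_past[OF inputs_before_subset inputs_before_mono] sets.top[of "past (inputs_before k)"]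
    by (intro sets.Diff sets.finite_UN) auto
  finally show ?thesis .
qed

lemma nonneg_sum_past: "{\<omega> \<in> space M. 0 \<le> (\<Sum>j\<in>{1..N}. st k \<omega> j)} \<in> sets (past (inputs_before k))"
proof -
  have "(\<lambda>\<omega>. \<Sum>j\<in>{1..N}. st k \<omega> j) \<in> borel_measurable (past (inputs_before k))"
    using st_measurable_past[OF inputs_before_subset order_refl] by (intro borel_measurable_sum) auto
  then have "(\<lambda>\<omega>. \<Sum>j\<in>{1..N}. st k \<omega> j) -` {0..} \<inter> space (past (inputs_before k)) \<in> sets (past (inputs_before k))"
    by (rule measurable_sets) simp
  then show ?thesis by (simp add: vimage_def Int_def conj_commute)
qed

lemma sync_event_events: "sync_event b k \<in> events"
  using sync_event_block sets_block_events[OF step_inputs_subset] by blast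

lemma prob_avoid_sync:
  assumes A: "A \<in> sets (past (inputs_before k))"
  shows "prob (A - sync_event b k) = (1 - sync_prob) * prob A"
proof -
  have "A \<in> events"
    using A sets_past_events[OF inputs_before_subset] by blast
  moreover note sync_event_events
  moreover have "prob (A \<inter> sync_event b k) = prob A * sync_prob"
    using prob_Int_past_block[OF inputs_before_subset step_inputs_subset inputs_before_disjoint A sync_event_block]
    by (simp add: prob_sync_event)
  ultimately show ?thesis
    by (simp add: finite_measure_Diff' algebra_simps)
qed

text \<open>Split on the sign of the state sum at time k: to stay without consensus at time
  k + 1, the matching synchronising event must be avoided.\<close>

lemma prob_no_consensus_Suc: "prob (no_consensus (Suc k)) \<le> (1 - sync_prob) * prob (no_consensus k)"
proof -
  define P where "P = {\<omega> \<in> space M. 0 \<le> (\<Sum>j\<in>{1..N}. st k \<omega> j)}"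
  define A1 where "A1 = no_consensus k \<inter> P"
  define A2 where "A2 = no_consensus k - P"
  have past: "A1 \<in> sets (past (inputs_before k))" "A2 \<in> sets (past (inputs_before k))"
    unfolding A1_def A2_def P_def using no_consensus_past nonneg_sum_past by auto
  then have ev: "A1 \<in> events" "A2 \<in> events"
    using sets_past_events[OF inputs_before_subset] by blast+
  have "no_consensus (Suc k) \<subseteq> (A1 - sync_event True k) \<union> (A2 - sync_event False k)"
  proof
    fix \<omega> assume \<omega>: "\<omega> \<in> no_consensus (Suc k)"
    then have "\<not> consensus (Suc k) \<omega>" "\<omega> \<in> no_consensus k" "\<omega> \<in> space M"
      by (auto simp: no_consensus_def)
    then show "\<omega> \<in> (A1 - sync_event True k) \<union> (A2 - sync_event False k)"
      using sync_event_consensus[of \<omega> True k] sync_event_consensus[of \<omega> False k]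
      by (auto simp: A1_def A2_def P_def)
  qed
  then have "prob (no_consensus (Suc k)) \<le> prob ((A1 - sync_event True k) \<union> (A2 - sync_event False k))"
    using ev sync_event_events by (intro finite_measure_mono) auto
  also have "\<dots> \<le> prob (A1 - sync_event True k) + prob (A2 - sync_event False k)"
    using ev sync_event_events by (intro measure_subadditive) auto
  also have "\<dots> = (1 - sync_prob) * (prob A1 + prob A2)"
    using past by (simp add: prob_avoid_sync algebra_simps)
  also have "prob A1 + prob A2 = prob (no_consensus k)"
  proof -
    have "no_consensus k = A1 \<union> A2" "A1 \<inter> A2 = {}" by (auto simp: A1_def A2_def)
    then show ?thesis using finite_measure_Union[OF ev] by simp
  qed
  finally show ?thesis .
qed

lemma sync_prob_bounds: "0 < sync_prob" "sync_prob \<le> 1"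
  by (simp_all add: sync_prob_def power_le_one)

lemma prob_no_consensus: "prob (no_consensus k) \<le> (1 - sync_prob) ^ k"
proof (induction k)
  case (Suc k)
  have "prob (no_consensus (Suc k)) \<le> (1 - sync_prob) * prob (no_consensus k)"
    by (rule prob_no_consensus_Suc)
  also have "\<dots> \<le> (1 - sync_prob) * (1 - sync_prob) ^ k"
    using Suc sync_prob_bounds by (intro mult_left_mono) auto
  finally show ?case by simp
qed simp

lemma never_consensus_null: "(\<Inter>k. no_consensus k) \<in> null_sets M"
proof -
  have ev: "no_consensus k \<in> events" for k
    using no_consensus_past sets_past_events[OF inputs_before_subset] by blast
  then have ev_inf: "(\<Inter>k. no_consensus k) \<in> events"
    by blast
  have "(\<lambda>k. (1 - sync_prob) ^ k) \<longlonglongrightarrow> 0"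
    using sync_prob_bounds by (intro LIMSEQ_power_zero) auto
  moreover have "prob (\<Inter>k. no_consensus k) \<le> (1 - sync_prob) ^ k" for k
  proof -
    have "prob (\<Inter>k. no_consensus k) \<le> prob (no_consensus k)"
      by (rule finite_measure_mono[OF _ ev]) blast
    also note prob_no_consensus
    finally show ?thesis .
  qed
  ultimately have "prob (\<Inter>k. no_consensus k) \<le> 0"
    by (intro LIMSEQ_le_const) auto
  then show ?thesis
    using ev_inf by (simp add: emeasure_eq_measure measure_le_0_iff null_setsI)
qed

lemma noise_inside:
  assumes \<eta>: "\<eta> \<le> 1"
  shows "AE \<omega> in M. \<forall>i\<in>{1..N}. \<forall>k. -1 < \<xi> i k \<omega> \<and> \<xi> i k \<omega> < 1"
proof -
  have "AE \<omega> in M. -1 < \<xi> i k \<omega> \<and> \<xi> i k \<omega> < 1" if i: "i \<in> {1..N}" for i k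
  proof -
    interpret noise: uniform_rv M "\<xi> i k" \<eta>
      by (rule noise_uniform[OF i])
    show ?thesis
      using noise.AE_interior by eventually_elim (use \<eta> in auto)
  qed
  then show ?thesis
    by (simp add: AE_ball_countable AE_all_countable)
qed

theorem eventual_agreement:
  assumes \<eta>: "\<eta> \<le> 1"
  shows "AE \<omega> in M. \<exists>c\<in>{1, -1::real}. \<exists>K. \<forall>k\<ge>K. \<forall>i\<in>{1..N}. st k \<omega> i = c"
  using AE_not_in[OF never_consensus_null] noise_inside[OF \<eta>] AE_space
proof eventually_elim
  case (elim \<omega>)
  then obtain t where "consensus t \<omega>"
    by (auto simp: no_consensus_def)
  then show ?case
    using consensus_absorbing elim(2) by blast
qed

end

theorem proposition2:
  fixes M :: "'a measure" and N :: nat and \<eta> :: real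
    and adj :: "nat \<Rightarrow> nat \<Rightarrow> nat \<Rightarrow> 'a \<Rightarrow> bool"
    and \<xi> :: "nat \<Rightarrow> nat \<Rightarrow> 'a \<Rightarrow> real"
    and x0 :: "'a \<Rightarrow> nat \<Rightarrow> real"
  assumes "prob_space M"
    and "N \<ge> 2" and "\<eta> > 0"
    and adj_sym: "\<forall>k i j. \<forall>\<omega>\<in>space M. adj k i j \<omega> = adj k j i \<omega>"
    and edges: "\<forall>k i j. 1 \<le> i \<longrightarrow> i < j \<longrightarrow> j \<le> N \<longrightarrow>
                  prob_space.prob M {\<omega> \<in> space M. adj k i j \<omega>} = 1 / 2"
    and noise: "\<forall>i k. 1 \<le> i \<longrightarrow> i \<le> N \<longrightarrow>
                  distr M lborel (\<xi> i k) = uniform_measure lborel {-\<eta>..\<eta>}"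
    and indep: "prob_space.indep_vars M (\<lambda>_. borel) (basic_family adj \<xi>) (basic_index N)"
    and x0_vals: "\<forall>\<omega>\<in>space M. \<forall>i\<in>{1..N}. x0 \<omega> i \<in> {1, -1}"
    and x0_indep: "indep_rv M
                  (Pi\<^sub>M {1..N} (\<lambda>_. borel)) (\<lambda>\<omega>. restrict (x0 \<omega>) {1..N})
                  (Pi\<^sub>M (basic_index N) (\<lambda>_. borel))
                  (\<lambda>\<omega>. \<lambda>j\<in>basic_index N. basic_family adj \<xi> j \<omega>)"
  shows "(\<eta> \<le> 1 \<longrightarrow>
            (AE \<omega> in M. \<exists>c\<in>{1, -1::real}. \<exists>K. \<forall>k\<ge>K. \<forall>i\<in>{1..N}.
                state N adj \<xi> x0 k \<omega> i = c))
       \<and> (\<eta> > 1 \<longrightarrow>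
            (\<forall>k. integral\<^sup>L M (state_sum N adj \<xi> x0 k)
                   = \<eta> powi (- int k) * integral\<^sup>L M (state_sum N adj \<xi> x0 0))
          \<and> (\<lambda>k. integral\<^sup>L M (state_sum N adj \<xi> x0 k)) \<longlonglongrightarrow> 0)"
proof -
  interpret erdos_sign_dynamics M N \<eta> adj \<xi> x0
    using assms unfolding erdos_sign_dynamics_def erdos_sign_dynamics_axioms_def by auto
  show ?thesis
    using eventual_agreement expected_state_sum_geometric expected_state_sum_tendsto_zero by blast
qed

end
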